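(* Let $n\geq 2$ and let $u:[0,\infty)\to\mathbb{R}$ be the potential of a rotationally symmetric ($U(n)$ invariant) extremal Kähler metric $\omega=i\partial\overline\partial u(|z|^2)$ on $\mathbb{C}^n$, and set $g(s)=su'(s)$ for $s=|z|^2$. Then one of the following holds: (1) $\omega$ is a constant scalar curvature Kähler metric. (2) There exist constants $\beta,c$ with $\beta>0$ such that $g$ is the smooth strictly increasing function $g:(0,\infty)\to(0,\beta)$ determined by the ODE $sg'(s)=\frac{1}{\beta^2}g(s)(g(s)-\beta)^2$; integrating, $\log(g(s))-\log(\beta-g(s))-\frac{\beta}{g(s)-\beta}=\log s+c$. These metrics have positive non-constant scalar curvature. (3) There exist constants $\gamma,\beta,c$ with $\gamma<0<\beta$ such that $g$ is the smooth strictly increasing function $g:(0,\infty)\to(0,\beta)$ determined by the ODE $sg'(s)=\frac{1}{\beta\gamma}g(s)(g(s)-\beta)(g(s)-\gamma)$; integrating, $\log(g(s))+\frac{\beta\gamma}{\beta(\beta-\gamma)}\log(\beta-g(s))+\frac{\beta\gamma}{\gamma(\gamma-\beta)}\log(g(s)-\gamma)=\log s+c$. (4) There exist constants $\gamma,\beta,c$ with $0<\beta<\gamma$ such that $g$ is the smooth strictly increasing function $g:(0,\infty)\to(0,\beta)$ determined by the ODE $sg'(s)=\frac{1}{\beta\gamma}g(s)(g(s)-\beta)(g(s)-\gamma)$; integrating, $\log(g(s))+\frac{\beta\gamma}{\beta(\beta-\gamma)}\log(\beta-g(s))+\frac{\beta\gamma}{\gamma(\gamma-\beta)}\log(\gamma-g(s))=\log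 s+c$.
   Context: A rotationally symmetric Kähler metric on (a domain of) $\mathbb{C}^n$ is given by a potential $u(s)$, $s=|z|^2=\sum_j|z_j|^2$, via $\omega=i\partial\overline\partial u=i\sum_{j,k}(\delta_{jk}u'(s)+u''(s)\overline z_jz_k)\,dz^j\wedge d\overline z^k$, which is positive definite iff $u'>0$ and $u'+su''>0$. A Kähler metric is extremal (in the sense of Calabi) if its scalar curvature $R$ satisfies $R_{,\overline\alpha\overline\beta}=0$, i.e. the $(1,0)$-gradient $g^{\alpha\overline\beta}\partial R/\partial\overline z_\beta\,\partial_{z_\alpha}$ is holomorphic. *)

theory Defs
  imports "HOL-Analysis.Analysis"
begin

text \<open>Wirtinger derivatives on C^n (modelled as complex^'n), defined from the real
  Frechet derivative: d/dz_j = (D(e_j) - i D(i e_j))/2, d/dzbar_j = (D(e_j) + i D(i e_j))/2.\<close>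

definition wirt :: "(complex^'n \<Rightarrow> complex) \<Rightarrow> 'n \<Rightarrow> complex^'n \<Rightarrow> complex" where
  "wirt f j z = (frechet_derivative f (at z) (axis j 1)
                 - \<i> * frechet_derivative f (at z) (axis j \<i>)) / 2"

definition wirtbar :: "(complex^'n \<Rightarrow> complex) \<Rightarrow> 'n \<Rightarrow> complex^'n \<Rightarrow> complex" where
  "wirtbar f j z = (frechet_derivative f (at z) (axis j 1)
                 + \<i> * frechet_derivative f (at z) (axis j \<i>)) / 2"

definition smooth_on_real :: "(real \<Rightarrow> real) \<Rightarrow> real set \<Rightarrow> bool" where
  "smooth_on_real u S = (\<forall>k. \<forall>x\<in>S. ((deriv ^^ k) u) differentiable (at x))"

text \<open>Coefficients g_{j kbar} of omega = i ddbar u(|z|^2), as in the context.\<close>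
definition kmetric :: "(real \<Rightarrow> real) \<Rightarrow> complex^'n \<Rightarrow> complex^'n^'n" where
  "kmetric u z = (\<chi> j k. (if j = k then complex_of_real (deriv u ((norm z)\<^sup>2)) else 0)
        + complex_of_real (deriv (deriv u) ((norm z)\<^sup>2)) * cnj (z $ j) * z $ k)"

text \<open>log det (g_{j kbar}) (the determinant is real positive for a Kaehler metric).\<close>
definition logdet :: "(real \<Rightarrow> real) \<Rightarrow> complex^'n \<Rightarrow> complex" where
  "logdet u z = complex_of_real (ln (norm (det (kmetric u z))))"

definition ricci :: "(real \<Rightarrow> real) \<Rightarrow> 'n \<Rightarrow> 'n \<Rightarrow> complex^'n \<Rightarrow> complex" where
  "ricci u j k z = - wirt (wirtbar (logdet u) k) j z"

text \<open>Scalar curvature R = g^{j kbar} R_{j kbar}, where the inverse metric g^{j kbar}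
  satisfies sum_k g^{j kbar} g_{l kbar} = delta_{jl}, i.e. g^{j kbar} = (G^{-1})_{k j}.\<close>
definition scal :: "(real \<Rightarrow> real) \<Rightarrow> complex^'n \<Rightarrow> real" where
  "scal u z = Re (\<Sum>j\<in>UNIV. \<Sum>k\<in>UNIV. matrix_inv (kmetric u z) $ k $ j * ricci u j k z)"

definition grad10 :: "(real \<Rightarrow> real) \<Rightarrow> complex^'n \<Rightarrow> complex^'n" where
  "grad10 u z = (\<chi> a. \<Sum>b\<in>UNIV. matrix_inv (kmetric u z) $ b $ a
                     * wirtbar (\<lambda>w. complex_of_real (scal u w)) b z)"

definition holomorphic_field :: "(complex^('n::finite) \<Rightarrow> complex^'n) \<Rightarrow> bool" where
  "holomorphic_field V = (\<forall>a. \<forall>z. (\<lambda>w. V w $ a) differentiable (at z)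
                              \<and> (\<forall>b. wirtbar (\<lambda>w. V w $ a) b z = 0))"

definition extremal :: "(real \<Rightarrow> real) \<Rightarrow> ('n::finite) itself \<Rightarrow> bool" where
  "extremal u (_ :: 'n itself) = holomorphic_field (grad10 u :: complex^'n \<Rightarrow> complex^'n)"

definition kaehler_potential :: "(real \<Rightarrow> real) \<Rightarrow> bool" where
  "kaehler_potential u = ((\<exists>S. open S \<and> {0..} \<subseteq> S \<and> smooth_on_real u S)
      \<and> (\<forall>s\<ge>0. deriv u s > 0 \<and> deriv u s + s * deriv (deriv u) s > 0))"

definition gfun :: "(real \<Rightarrow> real) \<Rightarrow> real \<Rightarrow> real" where
  "gfun u s = s * deriv u s"

end

theory Submission
  imports Defs
begin

text \<open>
  With \<open>s = |z|^2\<close> and \<open>g = s u'(s)\<close>, the metric matrix is \<open>u'(s) I + u''(s) conj(z) z^T\<close>, a scalar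
  matrix plus a rank-one matrix, so its determinant \<open>u'^(n-1) g'\<close> and its inverse are explicit. Hence
  the scalar curvature is a function \<open>R(s)\<close>, and its (1,0)-gradient is the radial field
  \<open>(R'/g') z\<close>, which is holomorphic only if \<open>R'/g'\<close> is a constant \<open>K\<close>, i.e. \<open>R = A + K g\<close>.
  Integrating the identities \<open>(g^(n-1) s Phi')' = - R g^(n-1) g'\<close> and
  \<open>(g^(n-1) s g')' = g' (n g^(n-1) + g^(n-1) s Phi')\<close>, where \<open>Phi = log det\<close>, twice from \<open>s = 0\<close>
  yields the ODE \<open>s g' = g (1 + a g + b g^2)\<close> with \<open>b = -K/((n+1)(n+2))\<close>. If \<open>K = 0\<close> the
  curvature is constant. Otherwise \<open>g(0) = 0\<close> and \<open>g' > 0\<close> on \<open>[0,\<infinity>)\<close>; since \<open>g\<close> cannot blow up at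
  finite \<open>s\<close>, the quadratic factor has a positive root \<open>\<beta>\<close> that bounds \<open>g\<close>, and separating
  variables in the three possible root configurations gives the three explicit families.
\<close>

section \<open>Scalar matrices plus a rank-one matrix\<close>

definition scalar_plus_outer :: "'a::comm_ring_1 \<Rightarrow> 'a \<Rightarrow> 'a^'n \<Rightarrow> 'a^'n \<Rightarrow> 'a^'n^'n" where
  "scalar_plus_outer a c x y = (\<chi> i j. (if i = j then a else 0) + c * x$i * y$j)"

lemma scalar_plus_outer_mult:
  fixes x y :: "'a::comm_ring_1^'n"
  shows "scalar_plus_outer a p x y ** scalar_plus_outer b q x y
       = scalar_plus_outer (a * b) (a * q + b * p + p * q * (\<Sum>l\<in>UNIV. y$l * x$l)) x y"
proof -
  have summand: "((if i = l then a else 0) + p * x$i * y$l) * ((if l = j then b else 0) + q * x$l * y$j)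
      = (if l = i then (if i = j then a * b else 0) + a * q * x$i * y$j else 0)
        + (if l = j then b * p * x$i * y$j else 0) + p * q * x$i * y$j * (y$l * x$l)" for i j l
    by (auto simp: algebra_simps)
  have "(\<Sum>l\<in>UNIV. ((if i = l then a else 0) + p * x$i * y$l) * ((if l = j then b else 0) + q * x$l * y$j))
      = (if i = j then a * b else 0) + (a * q + b * p + p * q * (\<Sum>l\<in>UNIV. y$l * x$l)) * x$i * y$j"
    for i j
    by (simp only: summand sum.distrib flip: sum_distrib_left) (simp add: algebra_simps)
  then show ?thesis
    by (simp add: scalar_plus_outer_def matrix_matrix_mult_def vec_eq_iff)
qed

lemma trace_scalar_plus_outer:
  fixes x y :: "'a::comm_ring_1^'n"
  shows "trace (scalar_plus_outer a c x y) = of_nat CARD('n) * a + c * (\<Sum>l\<in>UNIV. y$l * x$l)"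
  by (simp add: trace_def scalar_plus_outer_def sum.distrib sum_distrib_left mult_ac)

lemma matrix_inv_eqI:
  fixes A B :: "'a::comm_ring_1^'n^'n"
  assumes "A ** B = mat 1" "B ** A = mat 1"
  shows "matrix_inv A = B"
proof -
  have inv: "A ** matrix_inv A = mat 1 \<and> matrix_inv A ** A = mat 1"
    unfolding matrix_inv_def by (rule someI[of _ B]) (use assms in auto)
  have "matrix_inv A = matrix_inv A ** (A ** B)"
    by (simp add: assms)
  also have "\<dots> = (matrix_inv A ** A) ** B"
    by (simp add: matrix_mul_assoc)
  finally show ?thesis
    by (simp add: inv)
qed

lemma matrix_inv_scalar_plus_outer:
  fixes x y :: "'a::field^'n"
  defines "S \<equiv> \<Sum>l\<in>UNIV. y$l * x$l"
  assumes a: "a \<noteq> 0" and d: "a + c * S \<noteq> 0"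
  shows "matrix_inv (scalar_plus_outer a c x y)
       = scalar_plus_outer (1 / a) (- c / (a * (a + c * S))) x y"
proof (rule matrix_inv_eqI)
  define e where "e = a + c * S"
  define q where "q = - c / (a * e)"
  have "e \<noteq> 0"
    using d by (simp add: e_def)
  then have "(a * q + 1 / a * c + c * q * S) * (a * e) = c * (e - a - c * S)"
    using a by (simp add: q_def field_simps)
  then have coeff: "a * q + 1 / a * c + c * q * S = 0"
    using a \<open>e \<noteq> 0\<close> by (simp add: e_def)
  then have coeff': "1 / a * c + a * q + q * c * S = 0"
    by (simp add: algebra_simps)
  have unit: "scalar_plus_outer (a * (1 / a)) 0 x y = mat 1" "scalar_plus_outer (1 / a * a) 0 x y = mat 1"
    using a by (simp_all add: scalar_plus_outer_def mat_def vec_eq_iff)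
  show "scalar_plus_outer a c x y ** scalar_plus_outer (1 / a) q x y = mat 1"
    "scalar_plus_outer (1 / a) q x y ** scalar_plus_outer a c x y = mat 1"
    by (simp_all only: scalar_plus_outer_mult S_def[symmetric] coeff coeff' unit)
qed

lemma det_diagonal_but_one_row:
  fixes A :: "'a::comm_ring_1^'n^'n"
  assumes "\<And>i j. i \<noteq> k \<Longrightarrow> i \<noteq> j \<Longrightarrow> A$i$j = 0"
  shows "det A = (\<Prod>i\<in>UNIV. A$i$i)"
proof -
  have "(\<Prod>i\<in>UNIV. A$i$p i) = 0" if p: "p permutes UNIV" "p \<noteq> id" for p
  proof -
    obtain i where i: "p i \<noteq> i"
      using p(2) by (metis eq_id_iff)
    have "\<exists>i. p i \<noteq> i \<and> i \<noteq> k"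
    proof (cases "i = k")
      case True
      then have "p (p k) \<noteq> p k"
        using i permutes_inj[OF p(1)] by (metis injD)
      then show ?thesis
        using i True by blast
    qed (use i in blast)
    then show ?thesis
      using assms by (metis UNIV_I finite prod_zero)
  qed
  then have "det A = (\<Sum>p\<in>{id}. of_int (sign p) * (\<Prod>i\<in>UNIV. A$i$p i))"
    unfolding det_def by (intro sum.mono_neutral_right) (auto simp: finite_permutations)
  then show ?thesis
    by simp
qed

text \<open>Conjugating by the unipotent matrices \<open>I \<plusminus> v e\<^sub>k\<^sup>T\<close>, where \<open>v\<close> is \<open>w = c x\<close> divided by a
  pivot \<open>w\<^sub>k \<noteq> 0\<close> (with \<open>v\<^sub>k = 0\<close>), leaves a matrix whose only off-diagonal entries lie in row \<open>k\<close>.\<close>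

lemma det_scalar_plus_outer:
  fixes x y :: "'a::field^'n"
  shows "det (scalar_plus_outer a c x y) = a^(CARD('n) - 1) * (a + c * (\<Sum>l\<in>UNIV. y$l * x$l))"
proof (cases "c *s x = 0")
  case True
  then have "scalar_plus_outer a c x y = (\<chi> i j. if i = j then a else 0)"
    by (auto simp: scalar_plus_outer_def vec_eq_iff)
  moreover have "c * (\<Sum>l\<in>UNIV. y$l * x$l) = 0"
    using True by (auto simp: vec_eq_iff)
  ultimately show ?thesis
    by (simp add: det_diagonal power_eq_if)
next
  case False
  define w where "w = c *s x"
  then obtain k where wk: "w$k \<noteq> 0"
    using False by (auto simp: vec_eq_iff)
  define v where "v = (\<chi> i. if i = k then 0 else w$i / w$k)"
  define col :: "'a^'n \<Rightarrow> 'a^'n^'n" where "col z = (\<chi> i j. if j = k then z$i else 0)" for z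
  define M where "M = scalar_plus_outer a c x y"
  define T where "T = (mat 1 + col (- v)) ** M ** (mat 1 + col v)"
  have M: "M$i$j = (if i = j then a else 0) + w$i * y$j" for i j
    by (simp add: M_def w_def scalar_plus_outer_def mult.assoc)
  have det_unipotent: "det (mat 1 + col z) = 1" if "z$k = 0" for z
  proof -
    have "det (mat 1 + col z) = det (transpose (mat 1 + col z))"
      by simp
    also have "\<dots> = 1"
      using that by (subst det_diagonal_but_one_row[where k=k])
        (auto simp: transpose_def col_def mat_def intro!: prod.neutral)
    finally show ?thesis .
  qed
  have row_op: "((mat 1 + col (- v)) ** X)$i$j = X$i$j - v$i * X$k$j" for X :: "'a^'n^'n" and i j
    by (simp add: matrix_matrix_mult_def col_def mat_def distrib_right sum.distrib
        if_distrib[where f = "\<lambda>z. z * _"] cong: if_cong)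
  have col_op: "(X ** (mat 1 + col v))$i$j = X$i$j + (if j = k then \<Sum>l\<in>UNIV. X$i$l * v$l else 0)"
    for X :: "'a^'n^'n" and i j
    by (simp add: matrix_matrix_mult_def col_def mat_def distrib_left sum.distrib
        if_distrib[where f = "\<lambda>z. _ * z"] cong: if_cong)
  have v_w: "v$i * w$k = (if i = k then 0 else w$i)" for i
    using wk by (simp add: v_def)
  have yvw: "w$k * (\<Sum>l\<in>UNIV. y$l * v$l) = (\<Sum>l\<in>UNIV. y$l * w$l) - y$k * w$k"
  proof -
    have "w$k * (\<Sum>l\<in>UNIV. y$l * v$l) = (\<Sum>l\<in>UNIV. if l = k then 0 else y$l * w$l)"
      using wk by (auto simp: sum_distrib_left v_def intro!: sum.cong)
    then show ?thesis
      by (simp add: sum.If_cases Diff_eq[symmetric] sum_diff1)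
  qed
  have T_entry: "T$i$j = (if i = j then a else 0)
      + (if i = k then w$k * y$j + (if j = k then (\<Sum>l\<in>UNIV. y$l * w$l) - y$k * w$k else 0) else 0)"
    for i j
  proof -
    have "T$i$j = M$i$j - v$i * M$k$j
        + (if j = k then (\<Sum>l\<in>UNIV. M$i$l * v$l) - v$i * (\<Sum>l\<in>UNIV. M$k$l * v$l) else 0)"
      by (simp add: T_def col_op row_op right_diff_distrib sum_subtractf sum_distrib_left mult_ac)
    moreover have "(\<Sum>l\<in>UNIV. M$i$l * v$l) = a * v$i + w$i * (\<Sum>l\<in>UNIV. y$l * v$l)" for i
      by (simp only: M distrib_right sum.distrib)
        (simp add: sum_distrib_left mult_ac if_distrib[where f = "\<lambda>z. _ * z"] cong: if_cong)
    ultimately show ?thesis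
      using v_w[of i] yvw wk by (auto simp: M v_def algebra_simps)
  qed
  have "det T = (\<Prod>i\<in>UNIV. T$i$i)"
    by (rule det_diagonal_but_one_row[where k = k]) (simp add: T_entry)
  also have "\<dots> = (\<Prod>i\<in>UNIV. if i = k then a + (\<Sum>l\<in>UNIV. y$l * w$l) else a)"
    by (rule prod.cong) (auto simp: T_entry)
  also have "\<dots> = a^(CARD('n) - 1) * (a + (\<Sum>l\<in>UNIV. y$l * w$l))"
    by (simp add: prod.If_cases Diff_eq[symmetric] card_Diff_singleton)
  finally show ?thesis
    using det_unipotent[of v] det_unipotent[of "- v"]
    by (simp add: T_def det_mul M_def v_def w_def sum_distrib_left mult_ac)
qed

lemma transpose_scalar_plus_outer_mult_vec:
  fixes x y :: "'a::comm_ring_1^'n"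
  shows "transpose (scalar_plus_outer a c x y) *v y = (a + c * (\<Sum>l\<in>UNIV. y$l * x$l)) *s y"
  by (simp add: vec_eq_iff matrix_vector_mult_def transpose_def scalar_plus_outer_def algebra_simps
      sum.distrib sum_distrib_left if_distrib[where f = "\<lambda>z. z * _"] if_distrib[where f = "\<lambda>z. _ * z"]
      cong: if_cong)

section \<open>Wirtinger derivatives of radial functions\<close>

lemma has_derivative_power2_norm:
  fixes z :: "'a::real_inner"
  shows "((\<lambda>w. (norm w)^2) has_derivative (\<lambda>h. 2 * inner z h)) (at z)"
proof -
  have "((\<lambda>w. inner w w) has_derivative (\<lambda>h. inner z h + inner h z)) (at z)"
    by (rule has_derivative_inner[OF has_derivative_ident has_derivative_ident])
  then show ?thesis
    by (simp add: power2_norm_eq_inner inner_commute flip: mult_2)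
qed

lemma has_derivative_radial:
  fixes z :: "'a::real_inner"
  assumes "(F has_real_derivative F') (at ((norm z)^2))"
  shows "((\<lambda>w. complex_of_real (F ((norm w)^2))) has_derivative
          (\<lambda>h. complex_of_real (F' * (2 * inner z h)))) (at z)"
  using has_derivative_compose[OF has_derivative_power2_norm
      has_field_derivative_imp_has_derivative[OF assms]]
  by (intro has_derivative_of_real) simp

lemma has_derivative_radial_mult_coord:
  fixes z :: "complex^'n"
  assumes "(F has_real_derivative F') (at ((norm z)^2))"
  shows "((\<lambda>w. complex_of_real (F ((norm w)^2)) * w$k) has_derivative
          (\<lambda>h. complex_of_real (F ((norm z)^2)) * h$k + complex_of_real (F' * (2 * inner z h)) * z$k)) (at z)"
  using has_derivative_mult[OF has_derivative_radial[OF assms]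
      bounded_linear.has_derivative[OF bounded_linear_vec_nth has_derivative_ident]]
  by simp

lemma wirtbar_radial:
  fixes z :: "complex^'n"
  assumes "(F has_real_derivative F') (at ((norm z)^2))"
  shows "wirtbar (\<lambda>w. complex_of_real (F ((norm w)^2))) j z = complex_of_real F' * z$j"
  unfolding wirtbar_def frechet_derivative_at[OF has_derivative_radial[OF assms], symmetric]
  by (simp add: inner_axis complex_eq_iff)

lemma wirtbar_radial_mult_coord:
  fixes z :: "complex^'n"
  assumes "(F has_real_derivative F') (at ((norm z)^2))"
  shows "wirtbar (\<lambda>w. complex_of_real (F ((norm w)^2)) * w$k) j z = complex_of_real F' * z$j * z$k"
  unfolding wirtbar_def frechet_derivative_at[OF has_derivative_radial_mult_coord[OF assms], symmetric] inner_axis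
  by (cases "j = k") (simp_all add: complex_eq_iff axis_def field_simps)

lemma wirt_radial_mult_coord:
  fixes z :: "complex^'n"
  assumes "(F has_real_derivative F') (at ((norm z)^2))"
  shows "wirt (\<lambda>w. complex_of_real (F ((norm w)^2)) * w$k) j z
     = (if j = k then complex_of_real (F ((norm z)^2)) else 0) + complex_of_real F' * cnj (z$j) * z$k"
  unfolding wirt_def frechet_derivative_at[OF has_derivative_radial_mult_coord[OF assms], symmetric] inner_axis
  by (cases "j = k") (simp_all add: complex_eq_iff axis_def field_simps)

lemma norm_axis: "norm (axis i x :: 'a::real_normed_vector^'n) = norm x"
  unfolding norm_vec_def L2_set_def axis_def
  by (simp add: if_distrib[of norm] if_distrib[where f = "\<lambda>z. z^2"] cong: if_cong)

lemma sum_mult_cnj_eq_norm_power2: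
  fixes z :: "complex^'n"
  shows "(\<Sum>l\<in>UNIV. z$l * (\<chi> j. cnj (z$j))$l) = complex_of_real ((norm z)^2)"
proof -
  have "(norm z)^2 = (\<Sum>l\<in>UNIV. (cmod (z$l))^2)"
    unfolding norm_vec_def L2_set_def by (simp add: sum_nonneg)
  then show ?thesis
    by (simp only: vec_lambda_beta of_real_sum complex_norm_square)
qed

text \<open>On the ray \<open>c t = sqrt t e\<^sub>a\<close> the \<open>a\<close>-th component of the field is \<open>H t sqrt t\<close>, so \<open>H\<close> is
  differentiable; the \<open>d/dzbar\<^sub>a\<close>-derivative of \<open>H(|w|^2) w\<^sub>a\<close> is \<open>H'(|w|^2) w\<^sub>a\<^sup>2\<close>, so \<open>H' = 0\<close>.\<close>

lemma holomorphic_radial_field_imp_const: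
  fixes H :: "real \<Rightarrow> real"
  assumes hol: "holomorphic_field (\<lambda>w::complex^'n. of_real (H ((norm w)^2)) *s w)"
  shows "\<exists>K. \<forall>t>0. H t = K"
proof -
  obtain a :: 'n where True by blast
  define V where "V w = of_real (H ((norm w)^2)) * w$a" for w :: "complex^'n"
  have V_differentiable: "V differentiable (at w)" for w
    using hol unfolding holomorphic_field_def V_def by simp
  have wirtbar_V: "wirtbar V a w = 0" for w
    using hol unfolding holomorphic_field_def V_def by simp
  define c where "c t = sqrt t *\<^sub>R axis a (1::complex)" for t
  have norm_c: "(norm (c t))^2 = t" if "0 \<le> t" for t
    using that by (simp add: c_def norm_axis)
  have c_a: "c t $ a = of_real (sqrt t)" for t
    by (simp add: c_def of_real_def)
  have H_differentiable: "H differentiable (at t)" if t: "0 < t" for t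
  proof -
    have sqrt: "sqrt differentiable (at t)"
      using DERIV_real_sqrt[OF t] real_differentiable_def by blast
    then have "c differentiable (at t)"
      unfolding c_def by (rule differentiable_scaleR[OF _ differentiable_const])
    then have "(\<lambda>t. V (c t)) differentiable (at t)"
      by (rule differentiable_compose[OF V_differentiable])
    then have "(\<lambda>t. Re (V (c t))) differentiable (at t)"
      by (rule differentiable_compose[OF bounded_linear_imp_differentiable[OF bounded_linear_Re]])
    then have "(\<lambda>t. Re (V (c t)) / sqrt t) differentiable (at t)"
      using sqrt t by (intro differentiable_divide) auto
    then show ?thesis
    proof (rule differentiable_transform_within[OF _ t])
      show "Re (V (c x)) / sqrt x = H x" if "dist x t < t" for x
        using that by (simp add: V_def norm_c c_a dist_real_def)
    qed simp
  qed
  have "(H has_real_derivative 0) (at t within {0<..})" if t: "0 < t" for t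
  proof -
    have H': "(H has_real_derivative deriv H t) (at ((norm (c t))^2))"
      using H_differentiable[OF t] t by (simp add: norm_c DERIV_deriv_iff_real_differentiable)
    have "of_real (deriv H t) * c t $ a * c t $ a = 0"
      using wirtbar_V[of "c t"] unfolding V_def wirtbar_radial_mult_coord[OF H'] .
    then have "deriv H t = 0"
      using t by (simp add: c_a flip: of_real_mult)
    then show ?thesis
      using H_differentiable[OF t]
      by (metis DERIV_deriv_iff_real_differentiable has_field_derivative_at_within)
  qed
  then show ?thesis
    using has_field_derivative_zero_constant[of "{0<..}" H] by auto
qed

section \<open>The ODE \<open>s g' = g (1 + a g + b g^2)\<close>\<close>

lemma quadratic_factorization:
  fixes a b :: real
  assumes "b \<noteq> 0" "0 < a^2 - 4 * b"
  defines "\<beta> \<equiv> (- a - sqrt (a^2 - 4 * b)) / (2 * b)" and "\<gamma> \<equiv> (- a + sqrt (a^2 - 4 * b)) / (2 * b)"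
  shows "1 + a * \<tau> + b * \<tau>^2 = (\<tau> - \<beta>) * (\<tau> - \<gamma>) / (\<beta> * \<gamma>)"
proof -
  define d where "d = a^2 - 4 * b"
  have sq: "(sqrt d)^2 = d"
    using assms(2) by (simp add: d_def)
  define r where "r = sqrt d"
  have "\<beta> * \<gamma> = (a^2 - r^2) / (4 * b^2)"
    unfolding \<beta>_def \<gamma>_def d_def[symmetric] r_def[symmetric] using assms(1)
    by (simp add: field_simps power2_eq_square)
  also have "\<dots> = 1 / b"
    using assms(1) unfolding r_def sq unfolding d_def by (simp add: field_simps power2_eq_square)
  finally have prod: "\<beta> * \<gamma> = 1 / b" .
  have sum: "\<beta> + \<gamma> = - a / b"
    using assms(1) unfolding \<beta>_def \<gamma>_def by (simp add: field_simps)
  have "(\<tau> - \<beta>) * (\<tau> - \<gamma>) / (\<beta> * \<gamma>) = b * (\<tau>^2 - (\<beta> + \<gamma>) * \<tau> + \<beta> * \<gamma>)"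
    by (simp add: prod algebra_simps power2_eq_square)
  also have "\<dots> = 1 + a * \<tau> + b * \<tau>^2"
    unfolding sum prod using assms(1) by (simp add: field_simps power2_eq_square)
  finally show ?thesis ..
qed

lemma partial_fractions_double_root:
  fixes G \<beta> :: real
  assumes "G \<noteq> 0" "G \<noteq> \<beta>"
  shows "1 / G + 1 / (\<beta> - G) + \<beta> / (G - \<beta>)^2 = \<beta>^2 / (G * (G - \<beta>)^2)"
proof -
  obtain X where X: "X = G - \<beta>" by blast
  have nz: "X \<noteq> 0" and flip: "\<beta> - G = - X"
    using assms X by auto
  have "1 / G + 1 / (\<beta> - G) + \<beta> / (G - \<beta>)^2 - \<beta>^2 / (G * (G - \<beta>)^2)
      = (X^2 - G * X + \<beta> * G - \<beta>^2) / (G * X^2)"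
    unfolding X[symmetric] flip using assms(1) nz by (simp add: field_simps power2_eq_square)
  also have "X^2 - G * X + \<beta> * G - \<beta>^2 = 0"
    unfolding X by (simp add: algebra_simps power2_eq_square)
  finally show ?thesis
    by simp
qed

lemma partial_fractions_distinct_roots:
  fixes G \<beta> \<gamma> :: real
  assumes "G \<noteq> 0" "G \<noteq> \<beta>" "G \<noteq> \<gamma>" "\<beta> \<noteq> 0" "\<gamma> \<noteq> 0" "\<beta> \<noteq> \<gamma>"
  shows "1 / G - \<beta> * \<gamma> / (\<beta> * (\<beta> - \<gamma>)) / (\<beta> - G) + \<beta> * \<gamma> / (\<gamma> * (\<gamma> - \<beta>)) / (G - \<gamma>)
    = \<beta> * \<gamma> / (G * (G - \<beta>) * (G - \<gamma>))"
proof -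
  obtain X Y d where X: "X = G - \<beta>" and Y: "Y = G - \<gamma>" and d: "d = \<beta> - \<gamma>" by blast
  have nz: "X \<noteq> 0" "Y \<noteq> 0" "d \<noteq> 0" and flip: "\<beta> - G = - X" "\<gamma> - \<beta> = - d"
    using assms X Y d by auto
  have "1 / G - \<beta> * \<gamma> / (\<beta> * (\<beta> - \<gamma>)) / (\<beta> - G) + \<beta> * \<gamma> / (\<gamma> * (\<gamma> - \<beta>)) / (G - \<gamma>)
      - \<beta> * \<gamma> / (G * (G - \<beta>) * (G - \<gamma>))
      = (d * X * Y + \<gamma> * G * Y - \<beta> * G * X - d * \<beta> * \<gamma>) / (d * G * X * Y)"
    unfolding X[symmetric] Y[symmetric] d[symmetric] flip using assms(1,4,5) nz
    by (simp add: field_simps)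
  also have "d * X * Y + \<gamma> * G * Y - \<beta> * G * X - d * \<beta> * \<gamma> = 0"
    unfolding X Y d by (simp add: algebra_simps)
  finally show ?thesis
    by simp
qed

locale cubic_ode_solution =
  fixes g g' :: "real \<Rightarrow> real" and a b :: real
  assumes has_deriv: "\<And>x. 0 \<le> x \<Longrightarrow> (g has_real_derivative g' x) (at x)"
    and deriv_pos: "\<And>x. 0 \<le> x \<Longrightarrow> 0 < g' x"
    and at_0: "g 0 = 0"
    and ode: "\<And>t. 0 < t \<Longrightarrow> t * g' t = g t * (1 + a * g t + b * (g t)^2)"
begin

lemma strict_mono: "strict_mono_on {0..} g"
proof (rule strict_mono_onI)
  fix r s :: real
  assume r: "r \<in> {0..}" and "r < s"
  show "g r < g s"
  proof (rule DERIV_pos_imp_increasing[OF \<open>r < s\<close>])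
    fix x
    assume "r \<le> x"
    with r have "0 \<le> x"
      by simp
    then show "\<exists>y. (g has_real_derivative y) (at x) \<and> 0 < y"
      using has_deriv deriv_pos by blast
  qed
qed

lemma pos: "0 < t \<Longrightarrow> 0 < g t"
  using strict_mono at_0 by (metis atLeast_iff less_eq_real_def strict_mono_onD)

lemma deriv_eq: "0 \<le> x \<Longrightarrow> deriv g x = g' x"
  using has_deriv by (rule DERIV_imp_deriv)

lemma quadratic_pos: "0 < t \<Longrightarrow> 0 < 1 + a * g t + b * (g t)^2"
proof -
  assume t: "0 < t"
  then have "0 < g t * (1 + a * g t + b * (g t)^2)"
    using mult_pos_pos[OF t deriv_pos[of t]] ode[OF t] by simp
  then show ?thesis
    using pos[OF t] by (simp add: zero_less_mult_iff)
qed

lemma less_root: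
  assumes "0 < r" "1 + a * r + b * r^2 = 0" "0 \<le> s"
  shows "g s < r"
proof (rule ccontr)
  assume "\<not> g s < r"
  moreover have "continuous_on {0..s} g"
    by (meson DERIV_isCont atLeastAtMost_iff continuous_at_imp_continuous_on has_deriv)
  ultimately obtain x where "0 \<le> x" "x \<le> s" "g x = r"
    using IVT'[of g 0 r s] assms at_0 by auto
  then show False
    using quadratic_pos[of x] assms at_0 by (cases "x = 0") auto
qed

text \<open>A bound \<open>\<epsilon> \<tau>\<^sup>2 \<le> 1 + a \<tau> + b \<tau>\<^sup>2\<close> gives \<open>s g' \<ge> \<epsilon> g\<^sup>3\<close>, so \<open>-1/(2 g\<^sup>2) - \<epsilon> ln s\<close> is
  nondecreasing; this fails at \<open>s = exp (1/(2 \<epsilon> g(1)\<^sup>2))\<close>, i.e. \<open>g\<close> would blow up before.\<close>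

lemma no_quadratic_lower_bound:
  assumes eps: "0 < \<epsilon>" and q: "\<And>\<tau>. 0 \<le> \<tau> \<Longrightarrow> \<epsilon> * \<tau>^2 \<le> 1 + a * \<tau> + b * \<tau>^2"
  shows False
proof -
  define \<Phi> where "\<Phi> s = - 1 / (2 * (g s)^2) - \<epsilon> * ln s" for s
  define S where "S = exp (1 / (2 * \<epsilon> * (g 1)^2))"
  have S: "1 \<le> S"
    using eps pos[of 1] by (simp add: S_def)
  have "\<Phi> 1 \<le> \<Phi> S"
  proof (rule DERIV_nonneg_imp_nondecreasing[OF S])
    fix x assume x: "1 \<le> x" "x \<le> S"
    then have gx: "0 < g x"
      using pos by simp
    have "\<epsilon> * (g x)^3 \<le> g x * (1 + a * g x + b * (g x)^2)"
      using q[of "g x"] gx by (simp add: power3_eq_cube power2_eq_square mult_ac)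
    then have "\<epsilon> * (g x)^3 \<le> x * g' x"
      using ode[of x] x by simp
    then have "\<epsilon> * (g x)^3 / (x * (g x)^3) \<le> x * g' x / (x * (g x)^3)"
      using x gx by (intro divide_right_mono) auto
    then have "0 \<le> g' x / (g x)^3 - \<epsilon> / x"
      using x gx by simp
    moreover have "(\<Phi> has_real_derivative g' x / (g x)^3 - \<epsilon> / x) (at x)"
      unfolding \<Phi>_def[abs_def] using x gx
      by (auto intro!: derivative_eq_intros has_deriv simp: power2_eq_square power3_eq_cube)
    ultimately show "\<exists>y. (\<Phi> has_real_derivative y) (at x) \<and> 0 \<le> y"
      by blast
  qed
  moreover have "\<epsilon> * ln S = 1 / (2 * (g 1)^2)"
    using eps by (simp add: S_def)
  moreover have "0 < 1 / (2 * (g S)^2)"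
    using pos[of S] S by simp
  ultimately show False
    unfolding \<Phi>_def by simp
qed

lemma double_root_integral:
  assumes \<beta>: "0 < \<beta>" and factor: "\<And>\<tau>. 1 + a * \<tau> + b * \<tau>^2 = (\<tau> - \<beta>)^2 / \<beta>^2"
  shows "\<exists>c. \<forall>s>0. 0 < g s \<and> g s < \<beta> \<and> s * deriv g s = 1 / \<beta>^2 * g s * (g s - \<beta>)^2
      \<and> ln (g s) - ln (\<beta> - g s) - \<beta> / (g s - \<beta>) = ln s + c"
proof -
  have range: "0 < g s" "g s < \<beta>" if "0 < s" for s
    using pos[OF that] less_root[OF \<beta> _, of s] factor[of \<beta>] that by auto
  have ode': "s * g' s = 1 / \<beta>^2 * g s * (g s - \<beta>)^2" if "0 < s" for s
    using ode[OF that] factor[of "g s"] by simp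
  define \<Phi> where "\<Phi> s = ln (g s) - ln (\<beta> - g s) - \<beta> / (g s - \<beta>) - ln s" for s
  have "(\<Phi> has_real_derivative 0) (at s within {0<..})" if s: "0 < s" for s
  proof -
    note gs = range[OF s]
    have "(\<Phi> has_real_derivative g' s / g s + g' s / (\<beta> - g s) + \<beta> * g' s / (g s - \<beta>)^2 - 1 / s) (at s)"
      unfolding \<Phi>_def[abs_def] using s gs
      by (auto intro!: derivative_eq_intros has_deriv simp: power2_eq_square)
    moreover have "g' s / g s + g' s / (\<beta> - g s) + \<beta> * g' s / (g s - \<beta>)^2 - 1 / s
        = g' s * (1 / g s + 1 / (\<beta> - g s) + \<beta> / (g s - \<beta>)^2) - 1 / s"
      by (simp add: distrib_left mult.commute)
    also have "\<dots> = g' s * \<beta>^2 / (g s * (g s - \<beta>)^2) - 1 / s"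
      using gs by (simp add: partial_fractions_double_root)
    also have "\<dots> = 0"
      using ode'[OF s] s gs \<beta> by (simp add: field_simps)
    ultimately show ?thesis
      by (simp add: has_field_derivative_at_within)
  qed
  then obtain c where "\<forall>s\<in>{0<..}. \<Phi> s = c"
    using has_field_derivative_zero_constant[of "{0<..}" \<Phi>] by auto
  then show ?thesis
    using range ode' deriv_eq by (intro exI[of _ c]) (auto simp: \<Phi>_def algebra_simps)
qed

lemma distinct_roots_integral:
  assumes \<beta>: "0 < \<beta>" and \<gamma>: "\<gamma> < 0 \<or> \<beta> < \<gamma>"
    and factor: "\<And>\<tau>. 1 + a * \<tau> + b * \<tau>^2 = (\<tau> - \<beta>) * (\<tau> - \<gamma>) / (\<beta> * \<gamma>)"
  shows "\<exists>c. \<forall>s>0. 0 < g s \<and> g s < \<beta>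
      \<and> s * deriv g s = 1 / (\<beta> * \<gamma>) * g s * (g s - \<beta>) * (g s - \<gamma>)
      \<and> ln (g s) + \<beta> * \<gamma> / (\<beta> * (\<beta> - \<gamma>)) * ln (\<beta> - g s)
        + \<beta> * \<gamma> / (\<gamma> * (\<gamma> - \<beta>)) * ln \<bar>g s - \<gamma>\<bar> = ln s + c"
proof -
  let ?B = "\<beta> * \<gamma> / (\<beta> * (\<beta> - \<gamma>))" and ?C = "\<beta> * \<gamma> / (\<gamma> * (\<gamma> - \<beta>))"
  have \<gamma>0: "\<gamma> \<noteq> 0" "\<gamma> \<noteq> \<beta>"
    using \<beta> \<gamma> by auto
  have range: "0 < g s" "g s < \<beta>" if "0 < s" for s
    using pos[OF that] less_root[OF \<beta> _, of s] factor[of \<beta>] that by auto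
  have ode': "s * g' s = 1 / (\<beta> * \<gamma>) * g s * (g s - \<beta>) * (g s - \<gamma>)" if "0 < s" for s
    using ode[OF that] factor[of "g s"] by simp
  define \<sigma> where "\<sigma> = sgn (\<beta> - \<gamma>)"
  have abs_eq: "\<bar>g s - \<gamma>\<bar> = \<sigma> * (g s - \<gamma>)" and pos_\<sigma>: "0 < \<sigma> * (g s - \<gamma>)" if "0 < s" for s
    using range[OF that] \<gamma> \<beta> by (auto simp: \<sigma>_def)
  define \<Phi> where "\<Phi> s = ln (g s) + ?B * ln (\<beta> - g s) + ?C * ln (\<sigma> * (g s - \<gamma>)) - ln s" for s
  have "(\<Phi> has_real_derivative 0) (at s within {0<..})" if s: "0 < s" for s
  proof -
    note gs = range[OF s]
    have "(\<Phi> has_real_derivative g' s / g s + ?B * (- g' s / (\<beta> - g s))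
        + ?C * (\<sigma> * g' s / (\<sigma> * (g s - \<gamma>))) - 1 / s) (at s)"
      unfolding \<Phi>_def[abs_def] using s gs pos_\<sigma>[OF s] \<gamma>0
      by (auto intro!: derivative_eq_intros has_deriv simp: mult_ac)
    moreover have "\<sigma> \<noteq> 0" "g s \<noteq> \<gamma>"
      using pos_\<sigma>[OF s] by auto
    then have "\<sigma> * g' s / (\<sigma> * (g s - \<gamma>)) = g' s / (g s - \<gamma>)"
      by simp
    then have "g' s / g s + ?B * (- g' s / (\<beta> - g s))
        + ?C * (\<sigma> * g' s / (\<sigma> * (g s - \<gamma>))) - 1 / s
        = g' s * (1 / g s - ?B / (\<beta> - g s) + ?C / (g s - \<gamma>)) - 1 / s"
      by (simp add: algebra_simps)
    also have "\<dots> = g' s * (\<beta> * \<gamma>) / (g s * (g s - \<beta>) * (g s - \<gamma>)) - 1 / s"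
      by (subst partial_fractions_distinct_roots) (use gs \<beta> \<gamma>0 \<open>g s \<noteq> \<gamma>\<close> in auto)
    also have "\<dots> = 0"
    proof -
      define P where "P = g s * (g s - \<beta>) * (g s - \<gamma>)"
      have "P \<noteq> 0"
        using gs \<open>g s \<noteq> \<gamma>\<close> by (simp add: P_def)
      moreover have "s * g' s = P / (\<beta> * \<gamma>)"
        using ode'[OF s] by (simp add: P_def)
      ultimately show ?thesis
        unfolding P_def[symmetric] using s \<beta> \<gamma>0 by (simp add: field_simps)
    qed
    ultimately show ?thesis
      by (simp add: has_field_derivative_at_within)
  qed
  then obtain c where "\<forall>s\<in>{0<..}. \<Phi> s = c"
    using has_field_derivative_zero_constant[of "{0<..}" \<Phi>] by auto
  then show ?thesis
  proof (intro exI allI impI conjI)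
    fix s :: real
    assume s: "0 < s"
    show "0 < g s" "g s < \<beta>"
      using range[OF s] by auto
    show "s * deriv g s = 1 / (\<beta> * \<gamma>) * g s * (g s - \<beta>) * (g s - \<gamma>)"
      using ode'[OF s] deriv_eq s by simp
    show "ln (g s) + ?B * ln (\<beta> - g s) + ?C * ln \<bar>g s - \<gamma>\<bar> = ln s + c"
      using \<open>\<forall>s\<in>{0<..}. \<Phi> s = c\<close>[rule_format, of s] s by (simp add: \<Phi>_def abs_eq[OF s])
  qed
qed

text \<open>\<open>Q\<close> lets the caller attach its own consequences of the double-root data
  (\<open>a = -2/\<beta>\<close>, \<open>b = 1/\<beta>\<^sup>2\<close>, \<open>g < \<beta>\<close>) to the first alternative.\<close>

lemma classification:
  assumes "b \<noteq> 0"
    and Q: "\<And>\<beta>. 0 < \<beta> \<Longrightarrow> a = - 2 / \<beta> \<Longrightarrow> b = 1 / \<beta>^2 \<Longrightarrow> (\<And>s. 0 \<le> s \<Longrightarrow> g s < \<beta>) \<Longrightarrow> Q \<beta>"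
  shows "(\<exists>\<beta> c. \<beta> > 0 \<and> strict_mono_on {0<..} g
         \<and> (\<forall>s>0. 0 < g s \<and> g s < \<beta>
               \<and> s * deriv g s = 1 / \<beta>\<^sup>2 * g s * (g s - \<beta>)\<^sup>2
               \<and> ln (g s) - ln (\<beta> - g s) - \<beta> / (g s - \<beta>) = ln s + c)
         \<and> Q \<beta>)
    \<or> (\<exists>\<gamma> \<beta> c. \<gamma> < 0 \<and> 0 < \<beta> \<and> strict_mono_on {0<..} g
         \<and> (\<forall>s>0. 0 < g s \<and> g s < \<beta>
               \<and> s * deriv g s = 1 / (\<beta> * \<gamma>) * g s * (g s - \<beta>) * (g s - \<gamma>)
               \<and> ln (g s) + \<beta> * \<gamma> / (\<beta> * (\<beta> - \<gamma>)) * ln (\<beta> - g s)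
                   + \<beta> * \<gamma> / (\<gamma> * (\<gamma> - \<beta>)) * ln (g s - \<gamma>) = ln s + c))
    \<or> (\<exists>\<gamma> \<beta> c. 0 < \<beta> \<and> \<beta> < \<gamma> \<and> strict_mono_on {0<..} g
         \<and> (\<forall>s>0. 0 < g s \<and> g s < \<beta>
               \<and> s * deriv g s = 1 / (\<beta> * \<gamma>) * g s * (g s - \<beta>) * (g s - \<gamma>)
               \<and> ln (g s) + \<beta> * \<gamma> / (\<beta> * (\<beta> - \<gamma>)) * ln (\<beta> - g s)
                   + \<beta> * \<gamma> / (\<gamma> * (\<gamma> - \<beta>)) * ln (\<gamma> - g s) = ln s + c))"
proof -
  have mono: "strict_mono_on {0<..} g"
    by (rule monotone_on_subset[OF strict_mono]) auto
  define r where "r = sqrt (a^2 - 4 * b)"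
  define \<beta> where "\<beta> = (- a - r) / (2 * b)"
  define \<gamma> where "\<gamma> = (- a + r) / (2 * b)"
  have factor: "1 + a * \<tau> + b * \<tau>^2 = (\<tau> - \<beta>) * (\<tau> - \<gamma>) / (\<beta> * \<gamma>)"
    if "0 < a^2 - 4 * b" for \<tau>
    using quadratic_factorization[OF assms(1) that] unfolding \<beta>_def \<gamma>_def r_def .
  consider "b < 0" | "0 < b" "a < 0" "0 < a^2 - 4 * b" | "0 < b" "a < 0" "a^2 - 4 * b = 0"
    | "0 < b" "0 \<le> a" | "0 < b" "a^2 - 4 * b < 0"
    using assms by force
  then show ?thesis
  proof cases
    case 1
    then have "a^2 < a^2 - 4 * b"
      by simp
    then have "\<bar>a\<bar> < r"
      unfolding r_def by (metis real_sqrt_abs real_sqrt_less_mono)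
    then have \<gamma>: "\<gamma> < 0" and \<beta>: "0 < \<beta>"
      using 1 unfolding \<beta>_def \<gamma>_def by (auto intro: divide_pos_neg divide_neg_neg)
    have "0 < a^2 - 4 * b"
      using 1 by (smt (verit) zero_le_power2)
    then obtain c where c: "\<forall>s>0. 0 < g s \<and> g s < \<beta>
        \<and> s * deriv g s = 1 / (\<beta> * \<gamma>) * g s * (g s - \<beta>) * (g s - \<gamma>)
        \<and> ln (g s) + \<beta> * \<gamma> / (\<beta> * (\<beta> - \<gamma>)) * ln (\<beta> - g s)
          + \<beta> * \<gamma> / (\<gamma> * (\<gamma> - \<beta>)) * ln \<bar>g s - \<gamma>\<bar> = ln s + c"
      using distinct_roots_integral[OF \<beta> _ factor] \<gamma> by blast
    have "\<bar>g s - \<gamma>\<bar> = g s - \<gamma>" if "0 < s" for s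
      using c \<gamma> that by force
    then show ?thesis
      using \<gamma> \<beta> c mono by (intro disjI2 disjI1 exI[of _ \<gamma>] exI[of _ \<beta>] exI[of _ c]) simp
  next
    case 2
    then have "a^2 - 4 * b < a^2"
      by simp
    then have "r < \<bar>a\<bar>"
      unfolding r_def by (metis real_sqrt_abs real_sqrt_less_mono)
    moreover have "0 < r"
      using 2 by (simp add: r_def)
    ultimately have "r < - a" "0 < r"
      using 2 by auto
    then have \<beta>: "0 < \<beta>" and \<gamma>: "\<beta> < \<gamma>"
      using 2 unfolding \<beta>_def \<gamma>_def by (auto simp: divide_strict_right_mono)
    obtain c where c: "\<forall>s>0. 0 < g s \<and> g s < \<beta>
        \<and> s * deriv g s = 1 / (\<beta> * \<gamma>) * g s * (g s - \<beta>) * (g s - \<gamma>)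
        \<and> ln (g s) + \<beta> * \<gamma> / (\<beta> * (\<beta> - \<gamma>)) * ln (\<beta> - g s)
          + \<beta> * \<gamma> / (\<gamma> * (\<gamma> - \<beta>)) * ln \<bar>g s - \<gamma>\<bar> = ln s + c"
      using distinct_roots_integral[OF \<beta> _ factor] \<gamma> 2 by blast
    have "\<bar>g s - \<gamma>\<bar> = \<gamma> - g s" if "0 < s" for s
      using c \<gamma> that by force
    then show ?thesis
      using \<gamma> \<beta> c mono by (intro disjI2 exI[of _ \<gamma>] exI[of _ \<beta>] exI[of _ c]) simp
  next
    case 3
    define \<beta>' where "\<beta>' = - 2 / a"
    have \<beta>': "0 < \<beta>'" "a = - 2 / \<beta>'" "b = 1 / \<beta>'^2"
      using 3 by (auto simp: \<beta>'_def field_simps power2_eq_square)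
    have factor: "1 + a * \<tau> + b * \<tau>^2 = (\<tau> - \<beta>')^2 / \<beta>'^2" for \<tau>
      using 3 by (simp add: \<beta>'_def field_simps power2_eq_square)
    then have "g s < \<beta>'" if "0 \<le> s" for s
      using less_root[OF \<beta>'(1) _ that] by simp
    then have "Q \<beta>'"
      using Q \<beta>' by blast
    then show ?thesis
      using double_root_integral[OF \<beta>'(1) factor] \<beta>'(1) mono by blast
  next
    case 4
    have "b * \<tau>^2 \<le> 1 + a * \<tau> + b * \<tau>^2" if "0 \<le> \<tau>" for \<tau>
      using 4 that by simp
    then show ?thesis
      using no_quadratic_lower_bound 4 by blast
  next
    case 5
    have "(b - a^2 / 4) * \<tau>^2 \<le> 1 + a * \<tau> + b * \<tau>^2" for \<tau>
    proof -
      have "1 + a * \<tau> + b * \<tau>^2 - (b - a^2 / 4) * \<tau>^2 = (1 + a * \<tau> / 2)^2"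
        by (simp add: algebra_simps power2_eq_square)
      then show ?thesis
        by (metis diff_ge_0_iff_ge zero_le_power2)
    qed
    then show ?thesis
      using no_quadratic_lower_bound[of "b - a^2 / 4"] 5 by simp
  qed
qed

end

section \<open>Curvature of a \<open>U(n)\<close>-invariant potential\<close>

lemma DERIV_zero_imp_eq_at_0:
  fixes f :: "real \<Rightarrow> real"
  assumes "\<And>x. 0 \<le> x \<Longrightarrow> isCont f x" "\<And>x. 0 < x \<Longrightarrow> (f has_real_derivative 0) (at x)"
    and "0 \<le> t"
  shows "f t = f 0"
proof (cases "t = 0")
  case False
  have "continuous_on {0..t} f"
    using assms(1) by (intro continuous_at_imp_continuous_on) auto
  then show ?thesis
    using DERIV_isconst2[of 0 t f t] False assms by auto
qed simp

lemma double_root_affine_pos: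
  fixes A K \<beta> t :: real and n :: nat
  assumes "2 \<le> n" "0 < \<beta>" "0 \<le> t" "t < \<beta>"
    and "- A / (real n * real (n + 1)) = - 2 / \<beta>" "- K / (real (n + 1) * real (n + 2)) = 1 / \<beta>^2"
  shows "0 < A + K * t"
proof -
  define N where "N = real n"
  have N: "2 \<le> N"
    using assms(1) by (simp add: N_def)
  have a: "- A / (N * (N + 1)) = - 2 / \<beta>" and b: "- K / ((N + 1) * (N + 2)) = 1 / \<beta>^2"
    using assms(5,6) by (simp_all add: N_def add.commute)
  have "N * (N + 1) \<noteq> 0" "(N + 1) * (N + 2) \<noteq> 0"
    using N by auto
  then have "A = - A / (N * (N + 1)) * - (N * (N + 1))" "K = - K / ((N + 1) * (N + 2)) * - ((N + 1) * (N + 2))"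
    by simp_all
  then have A: "A = 2 * N * (N + 1) / \<beta>" and K: "K = - ((N + 1) * (N + 2) / \<beta>^2)"
    unfolding a b by simp_all
  have "K < 0"
    using N assms(2) by (simp add: K)
  then have "K * \<beta> < K * t"
    using assms(4) by (simp add: mult_less_cancel_left_neg)
  moreover have "A + K * \<beta> = (N + 1) * (N - 2) / \<beta>"
    using assms(2) by (simp add: A K field_simps power2_eq_square)
  moreover have "0 \<le> (N + 1) * (N - 2) / \<beta>"
    using N assms(2) by simp
  ultimately show ?thesis
    by linarith
qed

locale radial_potential =
  fixes u :: "real \<Rightarrow> real"
  assumes has_higher_deriv:
      "\<And>k x. 0 \<le> x \<Longrightarrow> ((deriv ^^ k) u has_real_derivative (deriv ^^ Suc k) u x) (at x)"
    and deriv_pos: "\<And>x. 0 \<le> x \<Longrightarrow> 0 < deriv u x"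
    and deriv_gfun_pos: "\<And>x. 0 \<le> x \<Longrightarrow> 0 < deriv u x + x * deriv (deriv u) x"

lemma kaehler_potential_imp_radial_potential:
  assumes "kaehler_potential u"
  shows "radial_potential u"
proof
  obtain S where S: "open S" "{0..} \<subseteq> S" "smooth_on_real u S"
    using assms unfolding kaehler_potential_def by blast
  fix k :: nat and x :: real
  assume "0 \<le> x"
  with S have "(deriv ^^ k) u differentiable (at x)"
    unfolding smooth_on_real_def by blast
  then show "((deriv ^^ k) u has_real_derivative (deriv ^^ Suc k) u x) (at x)"
    by (simp add: DERIV_deriv_iff_real_differentiable)
qed (use assms in \<open>auto simp: kaehler_potential_def\<close>)

context radial_potential
begin

definition u' :: "real \<Rightarrow> real" where
  "u' = deriv u"

definition u'' :: "real \<Rightarrow> real" where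
  "u'' = deriv u'"

definition u''' :: "real \<Rightarrow> real" where
  "u''' = deriv u''"

definition u'''' :: "real \<Rightarrow> real" where
  "u'''' = deriv u'''"

definition g' :: "real \<Rightarrow> real" where
  "g' t = u' t + t * u'' t"

definition g'' :: "real \<Rightarrow> real" where
  "g'' t = 2 * u'' t + t * u''' t"

definition Phi :: "nat \<Rightarrow> real \<Rightarrow> real" where
  "Phi n t = real (n - 1) * ln (u' t) + ln (g' t)"

definition Phi' :: "nat \<Rightarrow> real \<Rightarrow> real" where
  "Phi' n t = real (n - 1) * u'' t / u' t + g'' t / g' t"

definition Phi'' :: "nat \<Rightarrow> real \<Rightarrow> real" where
  "Phi'' n t = real (n - 1) * (u''' t * u' t - (u'' t)^2) / (u' t)^2
      + ((3 * u''' t + t * u'''' t) * g' t - (g'' t)^2) / (g' t)^2"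

definition scal_radial :: "nat \<Rightarrow> real \<Rightarrow> real" where
  "scal_radial n t = - real (n - 1) * Phi' n t / u' t - (Phi' n t + t * Phi'' n t) / g' t"

lemma gfun_eq: "gfun u t = t * u' t"
  by (simp add: gfun_def u'_def)

lemma u'_pos: "0 \<le> x \<Longrightarrow> 0 < u' x"
  using deriv_pos by (simp add: u'_def)

lemma g'_pos: "0 \<le> x \<Longrightarrow> 0 < g' x"
  using deriv_gfun_pos by (simp add: g'_def u'_def u''_def)

lemma has_real_derivative_u_derivs [derivative_intros]:
  assumes "0 \<le> x"
  shows "((\<lambda>t. u' t) has_real_derivative u'' x) (at x)"
    and "((\<lambda>t. u'' t) has_real_derivative u''' x) (at x)"
    and "((\<lambda>t. u''' t) has_real_derivative u'''' x) (at x)"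
    and "((\<lambda>t. u'''' t) has_real_derivative deriv u'''' x) (at x)"
  using has_higher_deriv[OF assms, of 1] has_higher_deriv[OF assms, of 2]
    has_higher_deriv[OF assms, of 3] has_higher_deriv[OF assms, of 4]
  by (simp_all add: u'_def u''_def u'''_def u''''_def eval_nat_numeral)

lemma has_real_derivative_gfun: "0 \<le> x \<Longrightarrow> (gfun u has_real_derivative g' x) (at x)"
  unfolding gfun_eq[abs_def] g'_def by (auto intro!: derivative_eq_intros)

lemma has_real_derivative_g' [derivative_intros]: "0 \<le> x \<Longrightarrow> (g' has_real_derivative g'' x) (at x)"
  unfolding g'_def[abs_def] g''_def by (auto intro!: derivative_eq_intros)

lemma has_real_derivative_g'' [derivative_intros]:
  "0 \<le> x \<Longrightarrow> (g'' has_real_derivative 3 * u''' x + x * u'''' x) (at x)"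
  unfolding g''_def[abs_def] by (auto intro!: derivative_eq_intros)

lemma has_real_derivative_Phi: "0 \<le> x \<Longrightarrow> (Phi n has_real_derivative Phi' n x) (at x)"
  using u'_pos g'_pos unfolding Phi_def[abs_def] Phi'_def
  by (auto intro!: derivative_eq_intros simp: field_simps)

lemma has_real_derivative_Phi' [derivative_intros]:
  "0 \<le> x \<Longrightarrow> (Phi' n has_real_derivative Phi'' n x) (at x)"
  using u'_pos[of x] g'_pos[of x] unfolding Phi'_def[abs_def] Phi''_def
  by (auto intro!: derivative_eq_intros simp: field_simps power2_eq_square)

lemma scal_radial_differentiable:
  assumes "0 \<le> x"
  shows "scal_radial n differentiable (at x)"
proof -
  have "\<exists>E. ((\<lambda>t. - real (n - 1) * Phi' n t / u' t - (Phi' n t + t * Phi'' n t) / g' t)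
      has_real_derivative E) (at x)"
    using assms u'_pos[OF assms] g'_pos[OF assms] unfolding Phi''_def
    by (intro exI) (auto intro!: derivative_eq_intros)
  then show ?thesis
    by (simp add: scal_radial_def[abs_def] real_differentiable_def)
qed

lemma one_div_g':
  assumes "0 \<le> s"
  shows "1 / g' s = 1 / u' s - s * u'' s / (u' s * g' s)"
proof -
  have "s * u'' s = g' s - u' s"
    by (simp add: g'_def)
  then show ?thesis
    using u'_pos[OF assms] g'_pos[OF assms] by (simp add: field_simps)
qed

lemma kmetric_eq:
  fixes z :: "complex^'n"
  defines "s \<equiv> (norm z)^2"
  shows "kmetric u z = scalar_plus_outer (of_real (u' s)) (of_real (u'' s)) (\<chi> j. cnj (z$j)) z"
  by (simp add: kmetric_def scalar_plus_outer_def u'_def u''_def s_def)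

lemma det_kmetric:
  fixes z :: "complex^'n"
  defines "s \<equiv> (norm z)^2"
  shows "det (kmetric u z) = of_real (u' s ^ (CARD('n) - 1) * g' s)"
  unfolding kmetric_eq det_scalar_plus_outer sum_mult_cnj_eq_norm_power2 s_def[symmetric]
  by (simp add: g'_def algebra_simps)

lemma logdet_eq: "logdet u = (\<lambda>z::complex^'n. of_real (Phi CARD('n) ((norm z)^2)))"
proof
  fix z :: "complex^'n"
  have "0 < u' ((norm z)^2)" "0 < g' ((norm z)^2)"
    by (simp_all add: u'_pos g'_pos)
  then show "logdet u z = of_real (Phi CARD('n) ((norm z)^2))"
    by (simp add: logdet_def det_kmetric Phi_def norm_mult norm_power ln_mult ln_realpow)
qed

lemma matrix_inv_kmetric:
  fixes z :: "complex^'n"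
  defines "s \<equiv> (norm z)^2"
  shows "matrix_inv (kmetric u z) = scalar_plus_outer (of_real (1 / u' s))
      (of_real (- u'' s / (u' s * g' s))) (\<chi> j. cnj (z$j)) z"
proof -
  have S: "(\<Sum>l\<in>UNIV. z$l * (\<chi> j. cnj (z$j))$l) = of_real s"
    unfolding s_def by (rule sum_mult_cnj_eq_norm_power2)
  have g': "of_real (u' s) + of_real (u'' s) * of_real s = (of_real (g' s) :: complex)"
    by (simp add: g'_def algebra_simps)
  have "0 < u' s" "0 < g' s"
    by (simp_all add: s_def u'_pos g'_pos)
  then have "matrix_inv (scalar_plus_outer (of_real (u' s)) (of_real (u'' s)) (\<chi> j. cnj (z$j)) z)
      = scalar_plus_outer (1 / of_real (u' s)) (- of_real (u'' s) / (of_real (u' s) * of_real (g' s)))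
          (\<chi> j. cnj (z$j)) z"
    using matrix_inv_scalar_plus_outer[of "of_real (u' s)" "of_real (u'' s)" z "\<chi> j. cnj (z$j)"]
    unfolding S g' by simp
  then show ?thesis
    unfolding kmetric_eq s_def[symmetric] by simp
qed

lemma ricci_eq:
  fixes z :: "complex^'n"
  defines "s \<equiv> (norm z)^2"
  shows "ricci u j k z = - scalar_plus_outer (of_real (Phi' CARD('n) s))
      (of_real (Phi'' CARD('n) s)) (\<chi> j. cnj (z$j)) z $ j $ k"
proof -
  have "wirtbar (logdet u :: complex^'n \<Rightarrow> complex) k
      = (\<lambda>w. of_real (Phi' CARD('n) ((norm w)^2)) * w$k)"
    unfolding logdet_eq
    using wirtbar_radial[OF has_real_derivative_Phi[OF zero_le_power2]] by blast
  then show ?thesis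
    unfolding s_def
    by (simp add: ricci_def wirt_radial_mult_coord[OF has_real_derivative_Phi'[OF zero_le_power2]]
        scalar_plus_outer_def)
qed

lemma scal_eq: "scal u z = scal_radial CARD('n) ((norm z)^2)" for z :: "complex^'n"
proof -
  define s where "s = (norm z)^2"
  define n where "n = CARD('n)"
  define B where "B = scalar_plus_outer (of_real (Phi' n s)) (of_real (Phi'' n s)) (\<chi> j. cnj (z$j)) z"
  have pos: "0 < u' s" "0 < g' s"
    by (simp_all add: s_def u'_pos g'_pos)
  have "(\<Sum>j\<in>UNIV. \<Sum>k\<in>UNIV. matrix_inv (kmetric u z) $ k $ j * ricci u j k z)
      = - trace (matrix_inv (kmetric u z) ** B)"
    unfolding ricci_eq trace_def matrix_matrix_mult_def B_def n_def s_def
    by (subst sum.swap) (simp add: sum_negf)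
  also have "trace (matrix_inv (kmetric u z) ** B) = of_real (real n * Phi' n s / u' s
      + s * Phi'' n s / u' s - s * u'' s * (Phi' n s + s * Phi'' n s) / (u' s * g' s))"
    unfolding B_def matrix_inv_kmetric scalar_plus_outer_mult trace_scalar_plus_outer
      sum_mult_cnj_eq_norm_power2 s_def[symmetric] n_def[symmetric]
    by (simp add: algebra_simps add_divide_distrib)
  finally have "scal u z = - (real n * Phi' n s / u' s + s * Phi'' n s / u' s
      - s * u'' s * (Phi' n s + s * Phi'' n s) / (u' s * g' s))"
    by (simp add: scal_def)
  also have "\<dots> = - (real (n - 1) * Phi' n s / u' s
      + (Phi' n s + s * Phi'' n s) * (1 / u' s - s * u'' s / (u' s * g' s)))"
    using pos by (simp add: n_def Suc_le_eq field_simps)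
  also have "1 / u' s - s * u'' s / (u' s * g' s) = 1 / g' s"
    by (simp add: s_def one_div_g')
  also have "- (real (n - 1) * Phi' n s / u' s + (Phi' n s + s * Phi'' n s) * (1 / g' s))
      = scal_radial n s"
    by (simp add: scal_radial_def)
  finally show ?thesis
    by (simp add: s_def n_def)
qed

lemma grad10_eq:
  "grad10 u = (\<lambda>z::complex^'n.
      of_real (deriv (scal_radial CARD('n)) ((norm z)^2) / g' ((norm z)^2)) *s z)"
proof
  fix z :: "complex^'n"
  define s where "s = (norm z)^2"
  define R' where "R' = deriv (scal_radial CARD('n)) s"
  have "(scal_radial CARD('n) has_real_derivative R') (at s)"
    using scal_radial_differentiable[of s] by (simp add: s_def R'_def DERIV_deriv_iff_real_differentiable)
  then have wirtbar_scal: "wirtbar (\<lambda>w. of_real (scal u w)) b z = of_real R' * z$b" for b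
    unfolding scal_eq s_def by (rule wirtbar_radial)
  have "1 / u' s + - u'' s / (u' s * g' s) * s = 1 / g' s"
    using one_div_g'[of s] by (simp add: s_def algebra_simps)
  then have "of_real (1 / u' s) + of_real (- u'' s / (u' s * g' s)) * of_real s
      = (of_real (1 / g' s) :: complex)"
    by (simp only: of_real_mult[symmetric] of_real_add[symmetric])
  then have "transpose (matrix_inv (kmetric u z)) *v z = of_real (1 / g' s) *s z"
    by (simp only: matrix_inv_kmetric transpose_scalar_plus_outer_mult_vec sum_mult_cnj_eq_norm_power2
      s_def[symmetric])
  then show "grad10 u z = of_real (R' / g' s) *s z"
    by (simp add: grad10_def wirtbar_scal vec_eq_iff matrix_vector_mult_def transpose_def mult_ac
        flip: sum_distrib_left)
qed

lemma extremal_imp_deriv_scal_radial: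
  assumes "extremal u TYPE('n::finite)"
  shows "\<exists>K. \<forall>t>0. deriv (scal_radial CARD('n)) t = K * g' t"
proof -
  obtain K where "\<forall>t>0. deriv (scal_radial CARD('n)) t / g' t = K"
    using assms holomorphic_radial_field_imp_const[of "\<lambda>t. deriv (scal_radial CARD('n)) t / g' t"]
    unfolding extremal_def grad10_eq by auto
  then have "deriv (scal_radial CARD('n)) t = K * g' t" if "0 < t" for t
    using that g'_pos[of t] by (auto simp: field_simps)
  then show ?thesis
    by blast
qed

lemma scal_radial_affine:
  assumes "\<forall>t>0. deriv (scal_radial n) t = K * g' t" "0 \<le> t"
  shows "scal_radial n t = scal_radial n 0 + K * gfun u t"
proof -
  have D: "((\<lambda>t. scal_radial n t - K * gfun u t) has_real_derivative deriv (scal_radial n) x - K * g' x) (at x)"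
    if "0 \<le> x" for x
    using that scal_radial_differentiable[OF that]
    by (auto intro!: derivative_eq_intros has_real_derivative_gfun
        simp: DERIV_deriv_iff_real_differentiable)
  have "((\<lambda>t. scal_radial n t - K * gfun u t) has_real_derivative 0) (at x)" if "0 < x" for x
    using D[of x] assms(1) that by simp
  then have "scal_radial n t - K * gfun u t = scal_radial n 0 - K * gfun u 0"
    using assms(2) D by (intro DERIV_zero_imp_eq_at_0[where f = "\<lambda>t. scal_radial n t - K * gfun u t"])
      (auto dest: DERIV_isCont)
  then show ?thesis
    by (simp add: gfun_def)
qed

lemma gfun_pos: "0 < t \<Longrightarrow> 0 < gfun u t"
  using u'_pos[of t] by (simp add: gfun_eq)

lemma gfun_nonneg: "0 \<le> t \<Longrightarrow> 0 \<le> gfun u t"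
  using u'_pos[of t] by (simp add: gfun_eq)

lemma pred_mult_gfun_power:
  "real (n - 1) * (gfun u x ^ (n - 1 - 1) * (x * u' x)) = real (n - 1) * gfun u x ^ (n - 1)"
  by (cases "n - 1") (simp_all add: gfun_eq mult_ac)

lemma has_real_derivative_first_integral:
  assumes "0 \<le> x"
  shows "((\<lambda>t. gfun u t ^ (n - 1) * (t * Phi' n t)) has_real_derivative
      - scal_radial n x * gfun u x ^ (n - 1) * g' x) (at x)"
proof -
  have D: "((\<lambda>t. gfun u t ^ (n - 1) * (t * Phi' n t)) has_real_derivative
      real (n - 1) * gfun u x ^ (n - 1 - 1) * g' x * (x * Phi' n x)
        + gfun u x ^ (n - 1) * (Phi' n x + x * Phi'' n x)) (at x)"
    using assms by (auto intro!: derivative_eq_intros has_real_derivative_gfun)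
  have "real (n - 1) * gfun u x ^ (n - 1 - 1) * g' x * (x * Phi' n x)
      = real (n - 1) * (gfun u x ^ (n - 1 - 1) * (x * u' x)) * g' x * Phi' n x / u' x"
    using u'_pos[OF assms] by (simp add: field_simps)
  also have "\<dots> = real (n - 1) * gfun u x ^ (n - 1) * g' x * Phi' n x / u' x"
    by (simp only: pred_mult_gfun_power)
  finally have first_term: "real (n - 1) * gfun u x ^ (n - 1 - 1) * g' x * (x * Phi' n x)
      = real (n - 1) * gfun u x ^ (n - 1) * g' x * Phi' n x / u' x" .
  have "real (n - 1) * gfun u x ^ (n - 1 - 1) * g' x * (x * Phi' n x)
        + gfun u x ^ (n - 1) * (Phi' n x + x * Phi'' n x)
      = - scal_radial n x * gfun u x ^ (n - 1) * g' x"
    unfolding first_term using u'_pos[OF assms] g'_pos[OF assms]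
    by (simp add: scal_radial_def field_simps)
  then show ?thesis
    using D by simp
qed

lemma has_real_derivative_second_integral:
  assumes "0 < n" "0 \<le> x"
  shows "((\<lambda>t. gfun u t ^ (n - 1) * (t * g' t)) has_real_derivative
      g' x * (real n * gfun u x ^ (n - 1) + gfun u x ^ (n - 1) * (x * Phi' n x))) (at x)"
proof -
  have D: "((\<lambda>t. gfun u t ^ (n - 1) * (t * g' t)) has_real_derivative
      real (n - 1) * gfun u x ^ (n - 1 - 1) * g' x * (x * g' x)
        + gfun u x ^ (n - 1) * (g' x + x * g'' x)) (at x)"
    using assms by (auto intro!: derivative_eq_intros has_real_derivative_gfun)
  have "real (n - 1) * gfun u x ^ (n - 1 - 1) * g' x * (x * g' x)
      = real (n - 1) * (gfun u x ^ (n - 1 - 1) * (x * u' x)) * g' x * (g' x / u' x)"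
    using u'_pos[OF assms(2)] by (simp add: field_simps)
  also have "\<dots> = real (n - 1) * gfun u x ^ (n - 1) * g' x * (1 + x * u'' x / u' x)"
    using u'_pos[OF assms(2)] by (simp only: pred_mult_gfun_power) (simp add: g'_def field_simps)
  finally have first_term: "real (n - 1) * gfun u x ^ (n - 1 - 1) * g' x * (x * g' x)
      = real (n - 1) * gfun u x ^ (n - 1) * g' x * (1 + x * u'' x / u' x)" .
  have "real (n - 1) * gfun u x ^ (n - 1 - 1) * g' x * (x * g' x)
        + gfun u x ^ (n - 1) * (g' x + x * g'' x)
      = g' x * (real n * gfun u x ^ (n - 1) + gfun u x ^ (n - 1) * (x * Phi' n x))"
    unfolding first_term using assms u'_pos[OF assms(2)] g'_pos[OF assms(2)]
    by (simp add: Phi'_def Suc_le_eq field_simps)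
  then show ?thesis
    using D by simp
qed

lemma has_real_derivative_gfun_power:
  assumes "0 \<le> x"
  shows "((\<lambda>t. c * gfun u t ^ Suc k / real (Suc k)) has_real_derivative c * gfun u x ^ k * g' x) (at x)"
  using DERIV_cdivide[OF DERIV_cmult[OF DERIV_power[OF has_real_derivative_gfun[OF assms], of "Suc k"]],
      of c "real (Suc k)"]
  by (simp add: mult_ac del: of_nat_Suc)

lemma first_integral_eq:
  assumes "0 < n" and affine: "\<And>t. 0 \<le> t \<Longrightarrow> scal_radial n t = A + K * gfun u t" and "0 \<le> x"
  shows "gfun u x ^ (n - 1) * (x * Phi' n x) = - A * gfun u x ^ n / real n
      - K * gfun u x ^ (n + 1) / real (n + 1)"
proof -
  obtain m where n: "n = Suc m"
    using assms(1) gr0_implies_Suc by blast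
  define F where "F t = gfun u t ^ m * (t * Phi' n t) + A * gfun u t ^ Suc m / real (Suc m)
      + K * gfun u t ^ Suc (Suc m) / real (Suc (Suc m))" for t
  have "(F has_real_derivative 0) (at y)" if y: "0 \<le> y" for y
  proof -
    have "((\<lambda>t. gfun u t ^ m * (t * Phi' n t)) has_real_derivative
        - scal_radial n y * gfun u y ^ m * g' y) (at y)"
      using has_real_derivative_first_integral[OF y, of n] by (simp add: n)
    then have "(F has_real_derivative - scal_radial n y * gfun u y ^ m * g' y
        + A * gfun u y ^ m * g' y + K * gfun u y ^ Suc m * g' y) (at y)"
      unfolding F_def by (intro DERIV_add has_real_derivative_gfun_power y)
    then show ?thesis
      by (simp add: affine y algebra_simps)
  qed
  then have "F x = F 0"
    using assms(3) by (intro DERIV_zero_imp_eq_at_0) (auto dest: DERIV_isCont)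
  then have "F x = 0"
    by (simp add: F_def gfun_def)
  then show ?thesis
    unfolding F_def n by (simp add: algebra_simps)
qed

lemma second_integral_eq:
  assumes "0 < n" and affine: "\<And>t. 0 \<le> t \<Longrightarrow> scal_radial n t = A + K * gfun u t" and "0 \<le> x"
  shows "gfun u x ^ (n - 1) * (x * g' x) = gfun u x ^ n - A * gfun u x ^ (n + 1) / (real n * real (n + 1))
      - K * gfun u x ^ (n + 2) / (real (n + 1) * real (n + 2))"
proof -
  obtain m where n: "n = Suc m"
    using assms(1) gr0_implies_Suc by blast
  define G where "G t = gfun u t ^ m * (t * g' t) - (real (Suc m) * gfun u t ^ Suc m / real (Suc m)
      + (- A / real (Suc m)) * gfun u t ^ Suc (Suc m) / real (Suc (Suc m))
      + (- K / real (Suc (Suc m))) * gfun u t ^ Suc (Suc (Suc m)) / real (Suc (Suc (Suc m))))" for t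
  have "(G has_real_derivative 0) (at y)" if y: "0 \<le> y" for y
  proof -
    have "((\<lambda>t. gfun u t ^ m * (t * g' t)) has_real_derivative
        g' y * (real (Suc m) * gfun u y ^ m + gfun u y ^ m * (y * Phi' n y))) (at y)"
      using has_real_derivative_second_integral[OF assms(1) y] by (simp add: n)
    then have "(G has_real_derivative g' y * (real (Suc m) * gfun u y ^ m + gfun u y ^ m * (y * Phi' n y))
        - (real (Suc m) * gfun u y ^ m * g' y + (- A / real (Suc m)) * gfun u y ^ Suc m * g' y
          + (- K / real (Suc (Suc m))) * gfun u y ^ Suc (Suc m) * g' y)) (at y)"
      unfolding G_def by (intro DERIV_diff DERIV_add has_real_derivative_gfun_power y)
    moreover have "gfun u y ^ m * (y * Phi' n y) = - A * gfun u y ^ Suc m / real (Suc m)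
        - K * gfun u y ^ Suc (Suc m) / real (Suc (Suc m))"
      using first_integral_eq[OF assms(1) affine y] by (simp add: n)
    then have "g' y * (real (Suc m) * gfun u y ^ m + gfun u y ^ m * (y * Phi' n y))
        - (real (Suc m) * gfun u y ^ m * g' y + (- A / real (Suc m)) * gfun u y ^ Suc m * g' y
          + (- K / real (Suc (Suc m))) * gfun u y ^ Suc (Suc m) * g' y) = 0"
      by (simp only:) (simp add: algebra_simps)
    ultimately show ?thesis
      by simp
  qed
  then have "G x = G 0"
    using assms(3) by (intro DERIV_zero_imp_eq_at_0) (auto dest: DERIV_isCont)
  then show ?thesis
    by (simp add: G_def gfun_def n field_simps del: of_nat_Suc)
qed

lemma scal_radial_affine_imp_ode:
  assumes "0 < n" and affine: "\<And>t. 0 \<le> t \<Longrightarrow> scal_radial n t = A + K * gfun u t" and t: "0 < t"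
  shows "t * g' t = gfun u t * (1 + (- A / (real n * real (n + 1))) * gfun u t
      + (- K / (real (n + 1) * real (n + 2))) * (gfun u t)^2)"
proof -
  have "gfun u t ^ (n - 1) * (t * g' t) = gfun u t ^ (n - 1) * (gfun u t * (1
      + (- A / (real n * real (n + 1))) * gfun u t + (- K / (real (n + 1) * real (n + 2))) * (gfun u t)^2))"
    using second_integral_eq[OF assms(1) affine, of t] t assms(1)
    by (simp add: power_add power2_eq_square algebra_simps flip: power_Suc)
  then show ?thesis
    using gfun_pos[OF t] by simp
qed

lemma extremal_imp_scal_radial_affine:
  assumes "extremal u TYPE('n::finite)"
  obtains A K where "\<And>t. 0 \<le> t \<Longrightarrow> scal_radial CARD('n) t = A + K * gfun u t"
  using extremal_imp_deriv_scal_radial[OF assms] scal_radial_affine by blast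

lemma cubic_ode_solution_if_scal_radial_affine:
  assumes "0 < n" and affine: "\<And>t. 0 \<le> t \<Longrightarrow> scal_radial n t = A + K * gfun u t"
  shows "cubic_ode_solution (gfun u) g' (- A / (real n * real (n + 1))) (- K / (real (n + 1) * real (n + 2)))"
proof
  show "(gfun u has_real_derivative g' x) (at x)" "0 < g' x" if "0 \<le> x" for x
    using has_real_derivative_gfun[OF that] g'_pos[OF that] by auto
  show "gfun u 0 = 0"
    by (simp add: gfun_def)
  show "t * g' t = gfun u t * (1 + - A / (real n * real (n + 1)) * gfun u t
      + - K / (real (n + 1) * real (n + 2)) * (gfun u t)^2)" if "0 < t" for t
    using scal_radial_affine_imp_ode[OF assms that] by simp
qed

lemma scal_not_const_if_affine:
  assumes "\<And>z::complex^'n. scal u z = A + K * gfun u ((norm z)^2)" and "K \<noteq> 0"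
  shows "\<not> (\<exists>C. \<forall>z::complex^'n. scal u z = C)"
proof -
  obtain i :: 'n where True
    by blast
  have "(norm (axis i (1::complex) :: complex^'n))^2 = 1"
    by (simp add: norm_axis)
  then have "scal u (axis i 1) = A + K * gfun u 1" "scal u (0 :: complex^'n) = A"
    by (simp_all add: assms(1) gfun_def)
  then have "scal u (axis i 1) \<noteq> scal u (0 :: complex^'n)"
    using assms(2) gfun_pos[of 1] by simp
  then show ?thesis
    by metis
qed

lemma scal_pos_if_double_root:
  fixes z :: "complex^'n"
  assumes "2 \<le> CARD('n)" and scal: "\<And>z::complex^'n. scal u z = A + K * gfun u ((norm z)^2)"
    and "0 < \<beta>" and below: "\<And>s. 0 \<le> s \<Longrightarrow> gfun u s < \<beta>"
    and "- A / (real CARD('n) * real (CARD('n) + 1)) = - 2 / \<beta>"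
    and "- K / (real (CARD('n) + 1) * real (CARD('n) + 2)) = 1 / \<beta>^2"
  shows "0 < scal u z"
  unfolding scal using assms(1,3,5,6) gfun_nonneg below
  by (intro double_root_affine_pos) auto

end

theorem theorem1p1:
  fixes u :: "real \<Rightarrow> real"
  assumes n2: "CARD('n::finite) \<ge> 2"
    and kp: "kaehler_potential u"
    and ext: "extremal u TYPE('n)"
  defines "g \<equiv> gfun u"
  shows
   "(\<exists>C. \<forall>z::complex^'n. scal u z = C)
    \<or> (\<exists>\<beta> c. \<beta> > 0 \<and> strict_mono_on {0<..} g
         \<and> (\<forall>s>0. 0 < g s \<and> g s < \<beta>
               \<and> s * deriv g s = 1 / \<beta>\<^sup>2 * g s * (g s - \<beta>)\<^sup>2
               \<and> ln (g s) - ln (\<beta> - g s) - \<beta> / (g s - \<beta>) = ln s + c)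
         \<and> (\<forall>z::complex^'n. scal u z > 0)
         \<and> \<not> (\<exists>C. \<forall>z::complex^'n. scal u z = C))
    \<or> (\<exists>\<gamma> \<beta> c. \<gamma> < 0 \<and> 0 < \<beta> \<and> strict_mono_on {0<..} g
         \<and> (\<forall>s>0. 0 < g s \<and> g s < \<beta>
               \<and> s * deriv g s = 1 / (\<beta> * \<gamma>) * g s * (g s - \<beta>) * (g s - \<gamma>)
               \<and> ln (g s) + \<beta> * \<gamma> / (\<beta> * (\<beta> - \<gamma>)) * ln (\<beta> - g s)
                   + \<beta> * \<gamma> / (\<gamma> * (\<gamma> - \<beta>)) * ln (g s - \<gamma>) = ln s + c))
    \<or> (\<exists>\<gamma> \<beta> c. 0 < \<beta> \<and> \<beta> < \<gamma> \<and> strict_mono_on {0<..} g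
         \<and> (\<forall>s>0. 0 < g s \<and> g s < \<beta>
               \<and> s * deriv g s = 1 / (\<beta> * \<gamma>) * g s * (g s - \<beta>) * (g s - \<gamma>)
               \<and> ln (g s) + \<beta> * \<gamma> / (\<beta> * (\<beta> - \<gamma>)) * ln (\<beta> - g s)
                   + \<beta> * \<gamma> / (\<gamma> * (\<gamma> - \<beta>)) * ln (\<gamma> - g s) = ln s + c))"
proof -
  interpret radial_potential u
    using kp by (rule kaehler_potential_imp_radial_potential)
  obtain A K where affine: "\<And>t. 0 \<le> t \<Longrightarrow> scal_radial CARD('n) t = A + K * g t"
    using extremal_imp_scal_radial_affine[OF ext] unfolding g_def by blast
  have scal: "scal u z = A + K * g ((norm z)^2)" for z :: "complex^'n"
    by (simp add: scal_eq affine)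
  define a where "a = - A / (real CARD('n) * real (CARD('n) + 1))"
  define b where "b = - K / (real (CARD('n) + 1) * real (CARD('n) + 2))"
  interpret ode: cubic_ode_solution g g' a b
    unfolding a_def b_def g_def using affine[unfolded g_def]
    by (intro cubic_ode_solution_if_scal_radial_affine) auto
  consider "K = 0" | "b \<noteq> 0"
    by (auto simp: b_def)
  then show ?thesis
  proof cases
    case 1
    then show ?thesis
      using scal by (intro disjI1 exI[of _ A] allI) simp
  next
    case 2
    then have "K \<noteq> 0"
      by (simp add: b_def)
    have "(\<forall>z::complex^'n. 0 < scal u z) \<and> \<not> (\<exists>C. \<forall>z::complex^'n. scal u z = C)"
      if "0 < \<beta>" "a = - 2 / \<beta>" "b = 1 / \<beta>^2" "\<And>s. 0 \<le> s \<Longrightarrow> g s < \<beta>" for \<beta>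
      using that scal_pos_if_double_root[OF n2 scal[unfolded g_def]]
        scal_not_const_if_affine[OF scal[unfolded g_def] \<open>K \<noteq> 0\<close>]
      by (auto simp: a_def b_def g_def)
    then show ?thesis
      by (rule disjI2[OF ode.classification[OF 2]])
  qed
qed


end
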